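(* Let $M\ge0$ and $\kappa\ge1$ be integers. Let $x(t)=\sum_{\gamma\in F}q_\gamma(t)e^{2\pi i\gamma t}$, $t\in\mathbb R$, where $F$ is a finite subset of $[0,1)$ of cardinality $\kappa$ and each $q_\gamma$ is a non-zero complex polynomial of degree at most $M$. Then $x$ can be completely recovered from its values $x(\ell)$, $\ell=0,1,\dots,2\kappa(M+1)-1$; that is, if $\tilde x(t)=\sum_{\gamma\in\tilde F}\tilde q_\gamma(t)e^{2\pi i\gamma t}$ is another function of the same form (with $\tilde F\subseteq[0,1)$ of cardinality $\kappa$ and non-zero polynomials $\tilde q_\gamma$ of degree at most $M$) with $\tilde x(\ell)=x(\ell)$ for $\ell=0,\dots,2\kappa(M+1)-1$, then $\tilde F=F$ and $\tilde q_\gamma=q_\gamma$ for all $\gamma\in F$. *)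

theory Defs
  imports "HOL-Analysis.Analysis" "HOL-Computational_Algebra.Polynomial"
begin

definition exp_poly_sum :: "real set \<Rightarrow> (real \<Rightarrow> complex poly) \<Rightarrow> real \<Rightarrow> complex" where
  "exp_poly_sum F q t = (\<Sum>\<gamma>\<in>F. poly (q \<gamma>) (complex_of_real t) * exp (2 * of_real pi * \<i> * of_real \<gamma> * of_real t))"

definition admissible :: "nat \<Rightarrow> nat \<Rightarrow> real set \<Rightarrow> (real \<Rightarrow> complex poly) \<Rightarrow> bool" where
  "admissible M \<kappa> F q \<longleftrightarrow> finite F \<and> card F = \<kappa> \<and> F \<subseteq> {0..<1} \<and>
     (\<forall>\<gamma>\<in>F. q \<gamma> \<noteq> 0 \<and> degree (q \<gamma>) \<le> M)"

end

theory Submission imports Defs begin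

text \<open>
  Sampled at the integers, \<open>x\<close> becomes \<open>x(l) = \<Sum>\<^sub>\<gamma> q\<^sub>\<gamma>(l) z\<^sub>\<gamma>\<^sup>l\<close> with distinct
  \<open>z\<^sub>\<gamma> = e\<^sup>2\<^sup>\<pi>\<^sup>i\<^sup>\<gamma>\<close> (distinct because \<open>F \<subseteq> [0,1)\<close>). The operator
  \<open>a\<^sub>l \<mapsto> a\<^sub>l\<^sub>+\<^sub>1 - w a\<^sub>l\<close> maps such a sequence to one of the same shape: the coefficient
  polynomial belonging to \<open>z\<^sub>\<gamma> = w\<close> drops in degree, the others keep their degree and
  stay non-zero. Hence a sum whose coefficient degrees are bounded by \<open>d\<^sub>\<gamma>\<close> and which
  vanishes at \<open>0, \<dots>, \<Sum> d\<^sub>\<gamma> - 1\<close> is identically zero. The difference of two admissible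
  signals involves at most \<open>2\<kappa>\<close> frequencies with degrees \<open>\<le> M\<close>, so it vanishes.
\<close>

definition twisted_diff :: "'a::comm_ring_1 \<Rightarrow> 'a \<Rightarrow> 'a poly \<Rightarrow> 'a poly" where
  "twisted_diff w z p = smult z (p \<circ>\<^sub>p [:1, 1:]) - smult w p"

lemma poly_twisted_diff_of_nat:
  "poly (twisted_diff w z p) (of_nat l) * z ^ l
     = poly p (of_nat (Suc l)) * z ^ Suc l - w * (poly p (of_nat l) * z ^ l)"
  by (simp add: twisted_diff_def poly_pcompose algebra_simps)

lemma coeff_pcompose_shift_degree:
  fixes p :: "'a::idom poly"
  shows "coeff (p \<circ>\<^sub>p [:1, 1:]) (degree p) = lead_coeff p"
proof (cases "degree p = 0")
  case True
  then obtain a where "p = [:a:]" by (rule degree_eq_zeroE)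
  then show ?thesis by simp
next
  case False
  then show ?thesis
    using lead_coeff_comp[of "[:1, 1:]" p] by (simp add: degree_pcompose)
qed

lemma degree_pcompose_shift_diff_less:
  fixes p :: "'a::idom poly"
  assumes "p \<circ>\<^sub>p [:1, 1:] - p \<noteq> 0"
  shows "degree (p \<circ>\<^sub>p [:1, 1:] - p) < degree p"
proof -
  have "degree (p \<circ>\<^sub>p [:1, 1:] - p) \<le> degree p"
    using degree_diff_le[of "p \<circ>\<^sub>p [:1, 1:]" "degree p" p] by (simp add: degree_pcompose)
  moreover have "coeff (p \<circ>\<^sub>p [:1, 1:] - p) (degree p) = 0"
    by (simp add: coeff_pcompose_shift_degree)
  ultimately show ?thesis
    using assms by (metis le_neq_implies_less leading_coeff_0_iff)
qed

lemma degree_twisted_diff_bound: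
  fixes p :: "'a::idom poly"
  assumes "p = 0 \<or> degree p < d"
  shows "twisted_diff w z p = 0 \<or> degree (twisted_diff w z p) < (if z = w then d - 1 else d)"
proof (cases "z = w")
  case True
  have diff: "twisted_diff w z p = smult w (p \<circ>\<^sub>p [:1, 1:] - p)"
    using True by (simp add: twisted_diff_def smult_diff_right)
  show ?thesis
  proof (cases "p \<circ>\<^sub>p [:1, 1:] - p = 0")
    case False
    then have "degree (p \<circ>\<^sub>p [:1, 1:] - p) < degree p" "p \<noteq> 0"
      using degree_pcompose_shift_diff_less by auto
    then show ?thesis
      using assms True diff degree_smult_le[of w "p \<circ>\<^sub>p [:1, 1:] - p"] by auto
  qed (simp add: diff)
next
  case False
  have "degree (twisted_diff w z p) \<le> degree p"
    unfolding twisted_diff_def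
    by (rule degree_diff_le) (use degree_smult_le in \<open>auto simp: degree_pcompose\<close>)
  then show ?thesis
    using assms False by (auto simp: twisted_diff_def)
qed

lemma twisted_diff_eq_0_imp_eq:
  fixes p :: "'a::idom poly"
  assumes "twisted_diff w z p = 0" and "p \<noteq> 0"
  shows "z = w"
proof -
  have "coeff (smult z (p \<circ>\<^sub>p [:1, 1:])) (degree p) = coeff (smult w p) (degree p)"
    using assms(1) by (simp add: twisted_diff_def)
  then have "z * lead_coeff p = w * lead_coeff p"
    by (simp add: coeff_pcompose_shift_degree)
  then show ?thesis
    using assms(2) by simp
qed

lemma pcompose_shift_eq_imp_const:
  fixes p :: "'a::{idom, ring_char_0} poly"
  assumes "p \<circ>\<^sub>p [:1, 1:] = p"
  shows "p = [:poly p 0:]"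
proof -
  have "poly p (of_nat (Suc l)) = poly p (of_nat l)" for l
    using arg_cong[OF assms, of "\<lambda>r. poly r (of_nat l)"] by (simp add: poly_pcompose add.commute)
  then have "poly p (of_nat l) = poly p 0" for l
    by (induction l) auto
  then have "range of_nat \<subseteq> {x. poly (p - [:poly p 0:]) x = 0}"
    by auto
  moreover have "infinite (range (of_nat :: nat \<Rightarrow> 'a))"
    using range_inj_infinite inj_of_nat by blast
  ultimately have "p - [:poly p 0:] = 0"
    using poly_roots_finite finite_subset by blast
  then show ?thesis by simp
qed

lemma twisted_diff_self_eq_0_imp_const:
  fixes p :: "'a::{idom, ring_char_0} poly"
  assumes "twisted_diff w w p = 0" and "w \<noteq> 0"
  shows "p = [:poly p 0:]"
proof (rule pcompose_shift_eq_imp_const)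
  show "p \<circ>\<^sub>p [:1, 1:] = p"
    using assms by (simp add: twisted_diff_def flip: smult_diff_right)
qed

lemma power_sum_samples_eq_0_imp_zero:
  fixes z :: "'b \<Rightarrow> 'a::{idom, ring_char_0}" and p :: "'b \<Rightarrow> 'a poly"
  assumes "finite G" and "inj_on z G" and "0 \<notin> z ` G"
    and "\<forall>g\<in>G. p g = 0 \<or> degree (p g) < d g"
    and "\<forall>l < sum d G. (\<Sum>g\<in>G. poly (p g) (of_nat l) * z g ^ l) = 0"
  shows "\<forall>g\<in>G. p g = 0"
  using assms(4,5)
proof (induction "sum d G" arbitrary: p d)
  case 0
  then show ?case using \<open>finite G\<close> by auto
next
  case (Suc m)
  then obtain g0 where g0: "g0 \<in> G" "d g0 > 0"
    by (metis gr0I sum.neutral nat.distinct(1))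
  define p' where "p' g = twisted_diff (z g0) (z g) (p g)" for g
  define d' where "d' = d(g0 := d g0 - 1)"
  have "sum d' G = m"
    using Suc.hyps(2) g0 \<open>finite G\<close> by (simp add: d'_def sum.remove)
  moreover have "\<forall>g\<in>G. p' g = 0 \<or> degree (p' g) < d' g"
  proof
    fix g assume "g \<in> G"
    then show "p' g = 0 \<or> degree (p' g) < d' g"
      using degree_twisted_diff_bound[of "p g" "d g" "z g0" "z g"] Suc.prems(1) \<open>inj_on z G\<close> g0
      by (auto simp: p'_def d'_def inj_on_eq_iff)
  qed
  moreover have "\<forall>l < m. (\<Sum>g\<in>G. poly (p' g) (of_nat l) * z g ^ l) = 0"
    using Suc.prems(2) Suc.hyps(2)
    by (simp add: p'_def poly_twisted_diff_of_nat sum_subtractf flip: sum_distrib_left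
             del: of_nat_Suc power_Suc)
  ultimately have p'0: "\<forall>g\<in>G. p' g = 0"
    using Suc.hyps(1) by blast
  have others: "p g = 0" if "g \<in> G" "g \<noteq> g0" for g
    using twisted_diff_eq_0_imp_eq[of "z g0" "z g" "p g"] p'0 that g0 \<open>inj_on z G\<close>
    by (auto simp: p'_def inj_on_eq_iff)
  have "p g0 = [:poly (p g0) 0:]"
    using twisted_diff_self_eq_0_imp_const p'0 g0 \<open>0 \<notin> z ` G\<close> by (force simp: p'_def)
  moreover have "poly (p g0) 0 = 0"
    using Suc.prems(2)[rule_format, of 0] \<open>finite G\<close> g0 others by (simp add: sum.remove)
  ultimately show ?case
    using others by (metis pCons_0_0)
qed

definition exp_2pi_i :: "real \<Rightarrow> complex" where
  "exp_2pi_i \<gamma> = exp (2 * of_real pi * \<i> * of_real \<gamma>)"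

lemma inj_on_exp_2pi_i: "inj_on exp_2pi_i {0..<1}"
proof (rule inj_onI)
  fix a b :: real
  assume a: "a \<in> {0..<1}" and b: "b \<in> {0..<1}" and "exp_2pi_i a = exp_2pi_i b"
  then obtain n :: int where
    "2 * of_real pi * \<i> * of_real a = 2 * of_real pi * \<i> * of_real b + of_real (of_int (2 * n) * pi) * \<i>"
    unfolding exp_2pi_i_def exp_eq by blast
  then have "of_real (2 * pi * a) * \<i> = of_real (2 * pi * (b + of_int n)) * \<i>"
    by (simp add: algebra_simps)
  then have "complex_of_real a = complex_of_real (b + of_int n)"
    by simp
  then have "a = b + of_int n"
    using of_real_eq_iff by blast
  moreover from this have "\<bar>of_int n\<bar> < (1::real)"
    using a b by auto
  ultimately show "a = b" by simp
qed

lemma exp_poly_sum_of_nat_superset: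
  assumes "finite G" and "F \<subseteq> G"
  shows "exp_poly_sum F q (real l)
           = (\<Sum>\<gamma>\<in>G. poly (if \<gamma> \<in> F then q \<gamma> else 0) (of_nat l) * exp_2pi_i \<gamma> ^ l)"
proof -
  have "exp (2 * of_real pi * \<i> * of_real \<gamma> * of_real (real l)) = exp_2pi_i \<gamma> ^ l" for \<gamma>
    unfolding exp_2pi_i_def by (metis exp_of_nat_mult mult.commute of_real_of_nat_eq)
  then have "exp_poly_sum F q (real l) = (\<Sum>\<gamma>\<in>G \<inter> F. poly (q \<gamma>) (of_nat l) * exp_2pi_i \<gamma> ^ l)"
    using assms(2) by (simp add: exp_poly_sum_def Int_absorb1)
  also have "\<dots> = (\<Sum>\<gamma>\<in>G. if \<gamma> \<in> F then poly (q \<gamma>) (of_nat l) * exp_2pi_i \<gamma> ^ l else 0)"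
    by (rule sum.inter_restrict[OF assms(1)])
  also have "\<dots> = (\<Sum>\<gamma>\<in>G. poly (if \<gamma> \<in> F then q \<gamma> else 0) (of_nat l) * exp_2pi_i \<gamma> ^ l)"
    by (rule sum.cong) auto
  finally show ?thesis .
qed

lemma exp_poly_sum_samples_eq_imp_eq:
  fixes M :: nat and F F' :: "real set" and q q' :: "real \<Rightarrow> complex poly"
  assumes "finite F" and "finite F'" and "F \<union> F' \<subseteq> {0..<1}"
    and "\<forall>\<gamma>\<in>F. degree (q \<gamma>) \<le> M" and "\<forall>\<gamma>\<in>F'. degree (q' \<gamma>) \<le> M"
    and "\<forall>l < card (F \<union> F') * (M + 1). exp_poly_sum F' q' (real l) = exp_poly_sum F q (real l)"
  shows "(if \<gamma> \<in> F' then q' \<gamma> else 0) = (if \<gamma> \<in> F then q \<gamma> else 0)"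
proof -
  define G where "G = F \<union> F'"
  define r where "r \<gamma> = (if \<gamma> \<in> F' then q' \<gamma> else 0) - (if \<gamma> \<in> F then q \<gamma> else 0)" for \<gamma>
  have F_sub: "F \<subseteq> G" and F'_sub: "F' \<subseteq> G"
    by (simp_all add: G_def)
  have G: "finite G" "inj_on exp_2pi_i G" "0 \<notin> exp_2pi_i ` G"
    using assms(1-3) inj_on_subset[OF inj_on_exp_2pi_i] by (auto simp: G_def exp_2pi_i_def)
  have "degree (r g) \<le> M" for g
    unfolding r_def by (rule degree_diff_le) (use assms(4,5) in auto)
  then have deg: "\<forall>g\<in>G. r g = 0 \<or> degree (r g) < M + 1"
    by (simp add: less_Suc_eq_le)
  have "(\<Sum>g\<in>G. poly (r g) (of_nat l) * exp_2pi_i g ^ l)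
          = exp_poly_sum F' q' (real l) - exp_poly_sum F q (real l)" for l
    unfolding exp_poly_sum_of_nat_superset[OF G(1) F'_sub] exp_poly_sum_of_nat_superset[OF G(1) F_sub]
    by (simp add: r_def left_diff_distrib sum_subtractf)
  then have "\<forall>l < sum (\<lambda>_. M + 1) G. (\<Sum>g\<in>G. poly (r g) (of_nat l) * exp_2pi_i g ^ l) = 0"
    using assms(6) unfolding G_def sum_constant of_nat_id by simp
  then have "\<forall>g\<in>G. r g = 0"
    by (rule power_sum_samples_eq_0_imp_zero[OF G deg])
  then show ?thesis
    by (cases "\<gamma> \<in> G") (auto simp: r_def G_def)
qed

theorem corollary3p1:
  fixes M \<kappa> :: nat and F F' :: "real set" and q q' :: "real \<Rightarrow> complex poly"
  assumes "\<kappa> \<ge> 1"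
    and "admissible M \<kappa> F q"
    and "admissible M \<kappa> F' q'"
    and "\<forall>l::nat. l < 2 * \<kappa> * (M + 1) \<longrightarrow> exp_poly_sum F' q' (real l) = exp_poly_sum F q (real l)"
  shows "F' = F \<and> (\<forall>\<gamma>\<in>F. q' \<gamma> = q \<gamma>)"
proof -
  note adm = assms(2,3)[unfolded admissible_def]
  have "card (F \<union> F') * (M + 1) \<le> 2 * \<kappa> * (M + 1)"
    using adm card_Un_le[of F F'] by (intro mult_le_mono1) simp
  then have ext_eq: "(if \<gamma> \<in> F' then q' \<gamma> else 0) = (if \<gamma> \<in> F then q \<gamma> else 0)" for \<gamma>
    using adm assms(4) by (intro exp_poly_sum_samples_eq_imp_eq[where M = M]) auto
  have "F \<subseteq> F'"
  proof
    fix \<gamma> assume "\<gamma> \<in> F"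
    then show "\<gamma> \<in> F'"
      using ext_eq[of \<gamma>] adm by (auto split: if_splits)
  qed
  then have "F = F'"
    by (rule card_subset_eq[rotated]) (use adm in simp_all)
  then show ?thesis
    using ext_eq by (metis (full_types))
qed

end
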